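(* Let $X$ be a metrizable $\sigma$-compact topological space, $Y$ a topological space, and $f\colon X\times Y\to\mathbb R$ a separately continuous function. Suppose $d$ is a metric inducing the topology of $X$ and $\mathcal K$ is a countable family of compact subsets of $X$ with $X=\bigcup_{K\in\mathcal K}K$, and suppose there is $\delta>0$ such that for each $x\in X$ the open ball $B_\delta(x)$ meets only finitely many $K\in\mathcal K$. Then $f$ is the pointwise limit of a sequence of continuous functions $X\times Y\to\mathbb R$ (with $X\times Y$ carrying the product topology). *)

theory Defs
  imports "HOL-Analysis.Analysis"
begin

end

theory Submission
  imports Defs
begin

text \<open>
  Approximate \<open>f\<close> at scale \<open>r\<close> by averaging the continuous functions \<open>f (c, \<cdot>)\<close> over the
  points \<open>c\<close> of an \<open>r\<close>-net of \<open>X\<close>, with tent weights \<open>max 0 (r - d x c)\<close> depending continuously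
  on \<open>x\<close>. If the net is locally finite (each \<open>\<delta>\<close>-ball contains finitely many net points, which
  follows from the local finiteness of the compact cover) then near each \<open>x\<^sub>0\<close> the average is a
  fixed finite sum of continuous functions divided by a positive one, hence jointly continuous.
  As \<open>r \<rightarrow> 0\<close> only net points close to \<open>x\<close> carry weight, so continuity of \<open>f (\<cdot>, y)\<close> makes
  the averages converge to \<open>f (x, y)\<close>.
\<close>

lemma weighted_average_dist_le:
  fixes w a :: "'c \<Rightarrow> real"
  assumes "finite S" "S \<noteq> {}"
    and "\<And>c. c \<in> S \<Longrightarrow> w c > 0" "\<And>c. c \<in> S \<Longrightarrow> \<bar>a c - L\<bar> \<le> e"
  shows "\<bar>(\<Sum>c\<in>S. w c * a c) / (\<Sum>c\<in>S. w c) - L\<bar> \<le> e"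
proof -
  have W: "(\<Sum>c\<in>S. w c) > 0" using assms by (intro sum_pos) auto
  have "(\<Sum>c\<in>S. w c * a c) / (\<Sum>c\<in>S. w c) - L = (\<Sum>c\<in>S. w c * (a c - L)) / (\<Sum>c\<in>S. w c)"
    using W by (simp add: field_simps sum_subtractf sum_distrib_left sum_distrib_right)
  also have "\<bar>\<dots>\<bar> = \<bar>\<Sum>c\<in>S. w c * (a c - L)\<bar> / (\<Sum>c\<in>S. w c)" using W by simp
  also have "\<dots> \<le> (\<Sum>c\<in>S. w c * e) / (\<Sum>c\<in>S. w c)"
  proof (rule divide_right_mono)
    have "\<bar>\<Sum>c\<in>S. w c * (a c - L)\<bar> \<le> (\<Sum>c\<in>S. \<bar>w c * (a c - L)\<bar>)" by (rule sum_abs)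
    also have "\<dots> \<le> (\<Sum>c\<in>S. w c * e)"
      using assms by (intro sum_mono) (simp add: abs_mult mult_left_mono less_imp_le)
    finally show "\<bar>\<Sum>c\<in>S. w c * (a c - L)\<bar> \<le> (\<Sum>c\<in>S. w c * e)" .
  qed (use W in simp)
  also have "\<dots> = e" using W by (simp add: sum_distrib_right[symmetric])
  finally show ?thesis .
qed

lemma continuous_map_open_cover:
  assumes "\<And>p. p \<in> topspace X \<Longrightarrow> \<exists>U. openin X U \<and> p \<in> U \<and> continuous_map (subtopology X U) Y g"
  shows "continuous_map X Y g"
proof -
  obtain U where U: "\<And>p. p \<in> topspace X \<Longrightarrow> openin X (U p) \<and> p \<in> U p \<and> continuous_map (subtopology X (U p)) Y g"
    using assms by metis
  show ?thesis
    by (rule pasting_lemma[where I = "topspace X" and T = U and f = "\<lambda>_. g"]) (use U in auto)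
qed

definition bump_average :: "('a \<Rightarrow> 'a \<Rightarrow> real) \<Rightarrow> 'a set \<Rightarrow> real \<Rightarrow> ('a \<Rightarrow> real) \<Rightarrow> 'a \<Rightarrow> real"
  where "bump_average d C r h x =
    (\<Sum>c\<in>{c \<in> C. d x c < r}. (r - d x c) * h c) / (\<Sum>c\<in>{c \<in> C. d x c < r}. r - d x c)"

lemma bump_average_dist_le:
  assumes "finite {c \<in> C. d x c < r}" "\<exists>c \<in> C. d x c < r"
    and "\<And>c. c \<in> C \<Longrightarrow> d x c < r \<Longrightarrow> \<bar>h c - a\<bar> \<le> e"
  shows "\<bar>bump_average d C r h x - a\<bar> \<le> e"
  unfolding bump_average_def using assms by (intro weighted_average_dist_le) auto

lemma bump_average_eq_sum_superset:
  assumes "finite F" "{c \<in> C. d x c < r} \<subseteq> F" "F \<subseteq> C"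
  shows "bump_average d C r h x = (\<Sum>c\<in>F. max 0 (r - d x c) * h c) / (\<Sum>c\<in>F. max 0 (r - d x c))"
proof -
  have "(\<Sum>c\<in>{c \<in> C. d x c < r}. (r - d x c) * k c) = (\<Sum>c\<in>F. max 0 (r - d x c) * k c)" for k
    using assms by (intro sum.mono_neutral_cong_left) auto
  from this[of h] this[of "\<lambda>_. 1"] show ?thesis by (simp add: bump_average_def)
qed

context Metric_space
begin

lemma continuous_map_tent_fst:
  assumes "c \<in> M"
  shows "continuous_map (prod_topology mtopology Y) euclideanreal (\<lambda>q. max 0 (r - d (fst q) c))"
proof -
  have "continuous_map (prod_topology mtopology Y) euclideanreal ((\<lambda>x. d x c) \<circ> fst)"
    using continuous_map_mdist[of mtopology "metric (M, d)" "\<lambda>x. x" "\<lambda>_. c"] assms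
    by (intro continuous_map_compose[OF continuous_map_fst]) (simp add: Metric_space_axioms)
  then show ?thesis by (intro continuous_intros) (simp add: o_def)
qed

lemma locally_finite_net:
  assumes "\<And>K. K \<in> \<K> \<Longrightarrow> compactin mtopology K" "\<Union>\<K> = M"
    and "\<And>x. x \<in> M \<Longrightarrow> finite {K \<in> \<K>. mball x \<delta> \<inter> K \<noteq> {}}" "r > 0"
  shows "\<exists>C \<subseteq> M. (\<forall>x \<in> M. finite {c \<in> C. d x c < \<delta>}) \<and> (\<forall>x \<in> M. \<exists>c \<in> C. d x c < r)"
proof -
  have "\<exists>N. finite N \<and> N \<subseteq> K \<and> K \<subseteq> (\<Union>c\<in>N. mball c r)" if "K \<in> \<K>" for K
    using assms(1)[OF that] compactin_imp_mtotally_bounded \<open>r > 0\<close> unfolding mtotally_bounded_def by blast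
  then obtain N where N: "\<And>K. K \<in> \<K> \<Longrightarrow> finite (N K) \<and> N K \<subseteq> K \<and> K \<subseteq> (\<Union>c\<in>N K. mball c r)"
    by metis
  show ?thesis
  proof (intro exI[of _ "\<Union>K\<in>\<K>. N K"] conjI ballI)
    show "(\<Union>K\<in>\<K>. N K) \<subseteq> M" using N assms(2) by blast
  next
    fix x assume x: "x \<in> M"
    have "{c \<in> \<Union>K\<in>\<K>. N K. d x c < \<delta>} \<subseteq> (\<Union>K\<in>{K \<in> \<K>. mball x \<delta> \<inter> K \<noteq> {}}. N K)"
    proof
      fix c assume "c \<in> {c \<in> \<Union>K\<in>\<K>. N K. d x c < \<delta>}"
      then obtain K where "K \<in> \<K>" "c \<in> N K" "d x c < \<delta>" by blast
      moreover have "c \<in> mball x \<delta> \<inter> K" using N calculation x assms(2) by auto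
      ultimately show "c \<in> (\<Union>K\<in>{K \<in> \<K>. mball x \<delta> \<inter> K \<noteq> {}}. N K)" by blast
    qed
    moreover have "finite (\<Union>K\<in>{K \<in> \<K>. mball x \<delta> \<inter> K \<noteq> {}}. N K)"
      using assms(3)[OF x] N by auto
    ultimately show "finite {c \<in> \<Union>K\<in>\<K>. N K. d x c < \<delta>}" by (rule finite_subset)
  next
    fix x assume x: "x \<in> M"
    then obtain K where "K \<in> \<K>" "x \<in> K" using assms(2) by blast
    then obtain c where "c \<in> N K" "x \<in> mball c r" using N by blast
    then show "\<exists>c \<in> \<Union>K\<in>\<K>. N K. d x c < r" using \<open>K \<in> \<K>\<close> by (auto simp: commute)
  qed
qed

lemma continuous_map_bump_average_near:
  assumes C: "C \<subseteq> M" and "x0 \<in> M"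
    and fin: "finite {c \<in> C. d x0 c < \<delta>}"
    and net: "\<And>x. x \<in> M \<Longrightarrow> \<exists>c \<in> C. d x c < r"
    and h: "\<And>c. c \<in> C \<Longrightarrow> continuous_map Y euclideanreal (h c)"
  shows "continuous_map (subtopology (prod_topology mtopology Y) (mball x0 (\<delta> - r) \<times> topspace Y))
           euclideanreal (\<lambda>(x, y). bump_average d C r (\<lambda>c. h c y) x)"
proof -
  define F where "F = {c \<in> C. d x0 c < \<delta>}"
  define U where "U = mball x0 (\<delta> - r) \<times> topspace Y"
  define weight :: "'a \<Rightarrow> 'a \<times> 'b \<Rightarrow> real"
    where "weight c q = max 0 (r - d (fst q) c)" for c q
  have "finite F" using fin by (simp add: F_def)
  have near: "{c \<in> C. d x c < r} \<subseteq> F" if "x \<in> mball x0 (\<delta> - r)" for x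
    using that C \<open>x0 \<in> M\<close> by (auto simp: F_def intro: le_less_trans[OF triangle])
  have weight: "continuous_map (prod_topology mtopology Y) euclideanreal (weight c)"
    if "c \<in> C" for c
    unfolding weight_def using that C by (intro continuous_map_tent_fst) auto
  have h_snd: "continuous_map (prod_topology mtopology Y) euclideanreal (\<lambda>q. h c (snd q))"
    if "c \<in> C" for c
    using continuous_map_compose[OF continuous_map_snd h[OF that]] by (simp add: o_def)
  have quotient_cont: "continuous_map (subtopology (prod_topology mtopology Y) U) euclideanreal
          (\<lambda>q. (\<Sum>c\<in>F. weight c q * h c (snd q)) / (\<Sum>c\<in>F. weight c q))"
  proof (intro continuous_map_real_divide continuous_map_from_subtopology)
    show "continuous_map (prod_topology mtopology Y) euclideanreal (\<lambda>q. \<Sum>c\<in>F. weight c q * h c (snd q))"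
      using weight h_snd \<open>finite F\<close> by (intro continuous_map_sum continuous_map_real_mult) (auto simp: F_def)
    show "continuous_map (prod_topology mtopology Y) euclideanreal (\<lambda>q. \<Sum>c\<in>F. weight c q)"
      using weight \<open>finite F\<close> by (intro continuous_map_sum) (auto simp: F_def)
    fix q assume "q \<in> topspace (subtopology (prod_topology mtopology Y) U)"
    then have q: "fst q \<in> mball x0 (\<delta> - r)" by (auto simp: U_def)
    then obtain c where "c \<in> C" "d (fst q) c < r" using net by auto
    with near[OF q] have "c \<in> F" "weight c q > 0" by (auto simp: weight_def)
    then show "(\<Sum>c\<in>F. weight c q) \<noteq> 0"
      using \<open>finite F\<close> by (metis sum_pos2 weight_def max.cobounded1 less_irrefl)
  qed
  have quotient_eq: "bump_average d C r (\<lambda>c. h c y) x =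
      (\<Sum>c\<in>F. weight c (x, y) * h c y) / (\<Sum>c\<in>F. weight c (x, y))" if "(x, y) \<in> U" for x y
    unfolding weight_def fst_conv using near[of x] that \<open>finite F\<close>
    by (intro bump_average_eq_sum_superset) (auto simp: U_def F_def)
  have "continuous_map (subtopology (prod_topology mtopology Y) U) euclideanreal
          (\<lambda>(x, y). bump_average d C r (\<lambda>c. h c y) x)"
    by (rule continuous_map_eq[OF quotient_cont]) (auto simp: quotient_eq U_def)
  then show ?thesis by (simp only: U_def)
qed

lemma continuous_map_bump_average:
  assumes C: "C \<subseteq> M" and "r < \<delta>"
    and fin: "\<And>x. x \<in> M \<Longrightarrow> finite {c \<in> C. d x c < \<delta>}"
    and net: "\<And>x. x \<in> M \<Longrightarrow> \<exists>c \<in> C. d x c < r"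
    and h: "\<And>c. c \<in> C \<Longrightarrow> continuous_map Y euclideanreal (h c)"
  shows "continuous_map (prod_topology mtopology Y) euclideanreal
           (\<lambda>(x, y). bump_average d C r (\<lambda>c. h c y) x)"
proof (rule continuous_map_open_cover)
  fix p assume "p \<in> topspace (prod_topology mtopology Y)"
  then obtain x0 y0 where p: "p = (x0, y0)" "x0 \<in> M" "y0 \<in> topspace Y" by auto
  have "openin (prod_topology mtopology Y) (mball x0 (\<delta> - r) \<times> topspace Y)"
    by (simp add: openin_prod_Times_iff)
  moreover have "p \<in> mball x0 (\<delta> - r) \<times> topspace Y" using p \<open>r < \<delta>\<close> by simp
  ultimately show "\<exists>U. openin (prod_topology mtopology Y) U \<and> p \<in> U \<and>
      continuous_map (subtopology (prod_topology mtopology Y) U) euclideanreal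
        (\<lambda>(x, y). bump_average d C r (\<lambda>c. h c y) x)"
    using continuous_map_bump_average_near[OF C \<open>x0 \<in> M\<close> fin[OF \<open>x0 \<in> M\<close>] net h]
    by (intro exI[of _ "mball x0 (\<delta> - r) \<times> topspace Y"] conjI)
qed

lemma bump_average_tendsto:
  assumes x: "x \<in> M" and "r \<longlonglongrightarrow> 0" and C: "\<And>n. C n \<subseteq> M"
    and fin: "\<And>n. finite {c \<in> C n. d x c < r n}" and net: "\<And>n. \<exists>c \<in> C n. d x c < r n"
    and h: "continuous_map mtopology euclideanreal h"
  shows "(\<lambda>n. bump_average d (C n) (r n) h x) \<longlonglongrightarrow> h x"
proof (rule tendstoI)
  fix e :: real assume "e > 0"
  then have "openin euclideanreal (ball (h x) (e / 2))" "h x \<in> ball (h x) (e / 2)" by auto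
  then obtain \<eta> where "\<eta> > 0" and \<eta>: "\<And>z. z \<in> M \<Longrightarrow> d x z < \<eta> \<Longrightarrow> h z \<in> ball (h x) (e / 2)"
    using h x unfolding continuous_map_from_metric by meson
  have "\<forall>\<^sub>F n in sequentially. r n < \<eta>" using \<open>r \<longlonglongrightarrow> 0\<close> \<open>\<eta> > 0\<close> by (rule order_tendstoD)
  then show "\<forall>\<^sub>F n in sequentially. dist (bump_average d (C n) (r n) h x) (h x) < e"
  proof eventually_elim
    case (elim n)
    have "\<bar>h c - h x\<bar> \<le> e / 2" if "c \<in> C n" "d x c < r n" for c
      using \<eta>[of c] that C[of n] elim by (auto simp: dist_real_def abs_minus_commute)
    then have "\<bar>bump_average d (C n) (r n) h x - h x\<bar> \<le> e / 2"
      by (intro bump_average_dist_le fin net)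
    then show ?case using \<open>e > 0\<close> by (simp add: dist_real_def)
  qed
qed

end

theorem mainTheorem3:
  fixes X :: "'a topology" and Y :: "'b topology"
    and d :: "'a \<Rightarrow> 'a \<Rightarrow> real"
    and f :: "'a \<times> 'b \<Rightarrow> real"
    and \<K> :: "'a set set" and \<delta> :: real
  assumes metric: "Metric_space (topspace X) d"
    and induces: "Metric_space.mtopology (topspace X) d = X"
    and sep_cont_x: "\<And>y. y \<in> topspace Y \<Longrightarrow> continuous_map X euclideanreal (\<lambda>x. f (x, y))"
    and sep_cont_y: "\<And>x. x \<in> topspace X \<Longrightarrow> continuous_map Y euclideanreal (\<lambda>y. f (x, y))"
    and K_countable: "countable \<K>"
    and K_compact: "\<And>K. K \<in> \<K> \<Longrightarrow> compactin X K"
    and K_cover: "\<Union>\<K> = topspace X"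
    and delta_pos: "\<delta> > 0"
    and loc_fin: "\<And>x. x \<in> topspace X \<Longrightarrow>
                    finite {K \<in> \<K>. Metric_space.mball (topspace X) d x \<delta> \<inter> K \<noteq> {}}"
  shows "\<exists>g :: nat \<Rightarrow> 'a \<times> 'b \<Rightarrow> real.
           (\<forall>n. continuous_map (prod_topology X Y) euclideanreal (g n)) \<and>
           (\<forall>z \<in> topspace (prod_topology X Y). (\<lambda>n. g n z) \<longlonglongrightarrow> f z)"
proof -
  interpret Metric_space "topspace X" d by (rule metric)
  define r where "r n = \<delta> / real (n + 2)" for n
  have r: "0 < r n" "r n < \<delta>" for n
    using delta_pos by (simp_all add: r_def divide_less_eq)
  have "r \<longlonglongrightarrow> 0" unfolding r_def by (rule LIMSEQ_ignore_initial_segment[OF lim_const_over_n])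
  have "\<exists>C \<subseteq> topspace X. (\<forall>x \<in> topspace X. finite {c \<in> C. d x c < \<delta>})
            \<and> (\<forall>x \<in> topspace X. \<exists>c \<in> C. d x c < r n)" for n
    using K_compact induces by (intro locally_finite_net[OF _ K_cover loc_fin r(1)]) simp
  then obtain C where C: "\<And>n. C n \<subseteq> topspace X" "\<And>n x. x \<in> topspace X \<Longrightarrow> finite {c \<in> C n. d x c < \<delta>}"
    "\<And>n x. x \<in> topspace X \<Longrightarrow> \<exists>c \<in> C n. d x c < r n"
    by metis
  have C_fin: "finite {c \<in> C n. d x c < r n}" if "x \<in> topspace X" for n x
    by (rule finite_subset[OF _ C(2)[OF that]]) (use r(2) in \<open>auto intro: less_trans\<close>)
  define g where "g n = (\<lambda>(x, y). bump_average d (C n) (r n) (\<lambda>c. f (c, y)) x)" for n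
  have "continuous_map (prod_topology mtopology Y) euclideanreal (g n)" for n
    unfolding g_def using C(1) by (intro continuous_map_bump_average[OF C(1) r(2) C(2,3)] sep_cont_y) auto
  then have "continuous_map (prod_topology X Y) euclideanreal (g n)" for n
    unfolding induces .
  moreover have "(\<lambda>n. g n (x, y)) \<longlonglongrightarrow> f (x, y)" if "x \<in> topspace X" "y \<in> topspace Y" for x y
    unfolding g_def using that sep_cont_x induces
    by (auto intro: bump_average_tendsto[OF _ \<open>r \<longlonglongrightarrow> 0\<close> C(1) C_fin C(3)])
  ultimately show ?thesis by (auto simp: topspace_prod_topology)
qed

end
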